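(* Let $k \geq 1$ be an integer. Let $F_1$ and $F_2$ be two anonymized fragments of a relation over a common class attribute, each a finite multiset of tuples of the form $(q, c)$, where $q$ is a (generalized) quasi-identifier value of that fragment and $c$ is a class value. Partition $F_1$ into equivalence classes $EQ_{11}, \dots, EQ_{1n}$ and $F_2$ into equivalence classes $EQ_{21}, \dots, EQ_{2m}$, where an equivalence class is the set of all tuples of the fragment sharing the same quasi-identifier value, and assume each fragment satisfies $k$-anonymity, i.e. $|EQ_{1i}| \geq k$ and $|EQ_{2j}| \geq k$ for all $i,j$. For an equivalence class $EQ$ let $C(EQ)$ denote the set of class values occurring in it and $freq(c, EQ)$ the number of tuples in $EQ$ with class value $c$; write $C_{1i} = C(EQ_{1i})$ and $C_{2j} = C(EQ_{2j})$. Then the fragmentation $\{F_1, F_2\}$ is $k$-anonymity non-reconstructible (i.e. the relation $F_1 \Join F_2$ obtained by joining the two fragments on the class attribute satisfies $k$-anonymity) if and only if for every pair $(i,j)$ one of the following holds: (1) $\sum_{c \in C_{1i} \cap C_{2j}} freq(c, EQ_{1i}) \cdot freq(c, EQ_{2j}) = 0$, or (2) $\sum_{c \in C_{1i} \cap C_{2j}} freq(c, EQ_{1i}) \cdot freq(c, EQ_{2j}) \geq k$.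
   Context: The join $F_1 \Join F_2$ on the class attribute is the multiset of tuples $(q_1, q_2, c)$ obtained from every pair of tuples $(q_1, c) \in F_1$ and $(q_2, c) \in F_2$ having the same class value $c$ (counted with multiplicity). A multiset of tuples satisfies $k$-anonymity if every equivalence class (maximal set of tuples sharing the same quasi-identifier values, here the same pair $(q_1,q_2)$) that is nonempty contains at least $k$ tuples. A fragmentation $\{F_1, F_2\}$ in which each fragment is $k$-anonymous is called $k$-anonymity non-reconstructible if the relation resulting from joining its fragments on the class attribute satisfies $k$-anonymity. *)

theory Defs
  imports Main "HOL-Library.Multiset"
begin

definition eq_class :: "('q \<times> 'c) multiset \<Rightarrow> 'q \<Rightarrow> ('q \<times> 'c) multiset" where
  "eq_class F q = filter_mset (\<lambda>t. fst t = q) F"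

definition qids :: "('q \<times> 'c) multiset \<Rightarrow> 'q set" where
  "qids F = fst ` set_mset F"

definition k_anonymous :: "nat \<Rightarrow> ('q \<times> 'c) multiset \<Rightarrow> bool" where
  "k_anonymous k F \<longleftrightarrow> (\<forall>q \<in> qids F. size (eq_class F q) \<ge> k)"

text \<open>Join on the class attribute, with multiplicity: tuples (q1, q2, c) viewed as
  quasi-identifier (q1, q2) and class c.\<close>
definition join_class :: "('q1 \<times> 'c) multiset \<Rightarrow> ('q2 \<times> 'c) multiset \<Rightarrow> (('q1 \<times> 'q2) \<times> 'c) multiset" where
  "join_class F1 F2 = sum_mset (image_mset (\<lambda>(q1, c). image_mset (\<lambda>(q2, _). ((q1, q2), c)) (filter_mset (\<lambda>t. snd t = c) F2)) F1)"

definition classes_of :: "('q \<times> 'c) multiset \<Rightarrow> 'c set" where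
  "classes_of EQ = snd ` set_mset EQ"

definition freq :: "'c \<Rightarrow> ('q \<times> 'c) multiset \<Rightarrow> nat" where
  "freq c EQ = count (image_mset snd EQ) c"

definition k_anon_non_reconstructible :: "nat \<Rightarrow> ('q1 \<times> 'c) multiset \<Rightarrow> ('q2 \<times> 'c) multiset \<Rightarrow> bool" where
  "k_anon_non_reconstructible k F1 F2 \<longleftrightarrow>
     k_anonymous k F1 \<and> k_anonymous k F2 \<and> k_anonymous k (join_class F1 F2)"

end

theory Submission
  imports Defs
begin

text \<open>The equivalence class of (q1, q2) in the join is the join of the equivalence classes of q1
  and q2, and the size of a join is the sum over shared class values of the products of the
  frequencies. Hence the join is k-anonymous exactly when each such sum is 0 or at least k;
  pairs of quasi-identifiers not occurring in the fragments contribute empty classes.\<close>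

lemma join_class_empty [simp]: "join_class {#} B = {#}"
  by (simp add: join_class_def)

lemma join_class_add_mset:
  "join_class (add_mset (q, c) A) B =
     image_mset (\<lambda>(q2, _). ((q, q2), c)) (filter_mset (\<lambda>t. snd t = c) B) + join_class A B"
  by (simp add: join_class_def)

lemma eq_class_join_class:
  "eq_class (join_class A B) (q1, q2) = join_class (eq_class A q1) (eq_class B q2)"
proof (induction A)
  case empty
  then show ?case by (simp add: eq_class_def)
next
  case (add x A)
  obtain q c where x: "x = (q, c)" by (cases x)
  have "filter_mset (\<lambda>t. fst t = (q1, q2))
          (image_mset (\<lambda>(q2, _). ((q, q2), c)) (filter_mset (\<lambda>t. snd t = c) B))
      = (if q = q1
         then image_mset (\<lambda>(q2, _). ((q, q2), c)) (filter_mset (\<lambda>t. snd t = c) (eq_class B q2))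
         else {#})"
    by (induction B) (auto simp: eq_class_def)
  with add show ?case
    by (auto simp: x join_class_add_mset eq_class_def)
qed

lemma freq_eq_size_filter: "freq c A = size (filter_mset (\<lambda>t. snd t = c) A)"
  by (induction A) (auto simp: freq_def)

lemma freq_add_mset: "freq c' (add_mset (q, c) A) = freq c' A + (if c' = c then 1 else 0)"
  by (simp add: freq_def)

lemma size_join_class_sum:
  assumes "finite S" and "classes_of A \<subseteq> S"
  shows "size (join_class A B) = (\<Sum>c\<in>S. freq c A * freq c B)"
  using assms(2)
proof (induction A)
  case empty
  then show ?case by (simp add: freq_def)
next
  case (add x A)
  obtain q c where x: "x = (q, c)" by (cases x)
  have "c \<in> S" and IH: "size (join_class A B) = (\<Sum>c\<in>S. freq c A * freq c B)"
    using add by (auto simp: x classes_of_def)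
  have "(\<Sum>c'\<in>S. freq c' (add_mset x A) * freq c' B)
      = (\<Sum>c'\<in>S. freq c' A * freq c' B) + (\<Sum>c'\<in>S. if c' = c then freq c' B else 0)"
    unfolding sum.distrib [symmetric] by (rule sum.cong) (auto simp: x freq_add_mset)
  also have "(\<Sum>c'\<in>S. if c' = c then freq c' B else 0) = freq c B"
    using \<open>c \<in> S\<close> assms(1) by simp
  finally show ?case
    using IH by (simp add: x join_class_add_mset freq_eq_size_filter)
qed

lemma size_join_class:
  "size (join_class A B) = (\<Sum>c \<in> classes_of A \<inter> classes_of B. freq c A * freq c B)"
proof -
  have fin: "finite (classes_of A)"
    by (simp add: classes_of_def)
  have "size (join_class A B) = (\<Sum>c\<in>classes_of A. freq c A * freq c B)"
    using fin by (rule size_join_class_sum) simp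
  also have "\<dots> = (\<Sum>c \<in> classes_of A \<inter> classes_of B. freq c A * freq c B)"
    using fin by (intro sum.mono_neutral_right)
      (auto simp: classes_of_def freq_def image_iff count_eq_zero_iff)
  finally show ?thesis .
qed

lemma mem_qids_iff_eq_class_nonempty: "q \<in> qids F \<longleftrightarrow> eq_class F q \<noteq> {#}"
  by (auto simp: qids_def eq_class_def filter_mset_eq_conv)

lemma k_anonymous_iff_all_classes:
  "k_anonymous k F \<longleftrightarrow> (\<forall>q. size (eq_class F q) = 0 \<or> size (eq_class F q) \<ge> k)"
  unfolding k_anonymous_def by (auto simp: mem_qids_iff_eq_class_nonempty)

lemma k_anonymous_join_class_iff:
  "k_anonymous k (join_class F1 F2) \<longleftrightarrow>
     (\<forall>q1 \<in> qids F1. \<forall>q2 \<in> qids F2.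
        size (join_class (eq_class F1 q1) (eq_class F2 q2)) = 0 \<or>
        size (join_class (eq_class F1 q1) (eq_class F2 q2)) \<ge> k)"
proof -
  have empty_outside:
    "join_class (eq_class F1 q1) (eq_class F2 q2) = {#}" if "q1 \<notin> qids F1 \<or> q2 \<notin> qids F2" for q1 q2
    using that by (auto simp: mem_qids_iff_eq_class_nonempty join_class_def)
  show ?thesis
    unfolding k_anonymous_iff_all_classes
    by (metis empty_outside eq_class_join_class size_empty surj_pair)
qed

theorem theorem4p1:
  fixes k :: nat and F1 :: "('q1 \<times> 'c) multiset" and F2 :: "('q2 \<times> 'c) multiset"
  assumes "k \<ge> 1"
    and "k_anonymous k F1" and "k_anonymous k F2"
  shows "k_anon_non_reconstructible k F1 F2 \<longleftrightarrow>
    (\<forall>q1 \<in> qids F1. \<forall>q2 \<in> qids F2.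
       (let EQ1 = eq_class F1 q1; EQ2 = eq_class F2 q2;
            s = (\<Sum>c \<in> classes_of EQ1 \<inter> classes_of EQ2. freq c EQ1 * freq c EQ2)
        in s = 0 \<or> s \<ge> k))"
  using assms(2,3)
  by (simp add: k_anon_non_reconstructible_def k_anonymous_join_class_iff size_join_class Let_def)

end
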